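(* Let $m$ be an odd integer and $a\in\mathbb{F}_{2^{3m}}^*$. The (APN) map $f:\mathbb{F}_{2^{3m}}\to\mathbb{F}_{2^{3m}}$ given by \[f(x)=x^3+a^{-1}\mathrm{Tr}_{2^{3m}/2^3}(a^3x^9+a^6x^{18})\] satisfies $M_1(f)=2^{3m-1}$ and $M_4(f)=2^{3m-3}$ (and $M_r(f)=0$ otherwise); in particular $|\mathrm{Im}(f)|=5\cdot 2^{3m-3}$.
   Context: $\mathrm{Tr}_{2^{3m}/2^3}(x)=\sum_{j=0}^{m-1}x^{8^j}$ is the trace map from $\mathbb{F}_{2^{3m}}$ onto $\mathbb{F}_8$. $M_r(f)$ is the number of $y\in\mathbb{F}_{2^{3m}}$ with exactly $r$ preimages under $f$. *)

theory Defs
  imports Main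
begin

definition trace8 :: "nat \<Rightarrow> 'a::field \<Rightarrow> 'a" where
  "trace8 m x = (\<Sum>j<m. x ^ (8 ^ j))"

definition Mcount :: "nat \<Rightarrow> ('a::finite \<Rightarrow> 'a) \<Rightarrow> nat" where
  "Mcount r f = card {y. card {x. f x = y} = r}"

end

theory Submission
  imports Defs "HOL-Computational_Algebra.Polynomial" "HOL-Computational_Algebra.Primes"
    "HOL-Number_Theory.Cong"
begin

(* f x = a^-1 * g (a * x^3) with g z = z + Tr (z^3 + z^6), and cubing is a bijection since
   3 is prime to 8^m - 1 for odd m, so f and g have the same fibre sizes.  As m is odd, Tr is
   the identity on F8, so every y splits uniquely as y0 + s with Tr y0 = 0 and s in F8.
   Since Tr is F8-linear and kills y0, y0^2 and y0^4, for e in F8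
     g (y0 + e) = y0 + Tr (y0^3 + y0^6) + Q e,   where Q e = e + e^3 + e^6,
   and g moves every point only inside its F8-coset; hence each fibre of g is a fibre of Q
   on F8.  On F8, Q e = 1 if the absolute trace e + e^2 + e^4 is 1 and Q e = e^2 otherwise,
   so Q has one fibre of size 4, four of size 1 and three empty ones, and each of them is
   met by |ker Tr| = 8^(m-1) values of y. *)

lemma CHAR_eq_2:
  assumes "(2::'a::{semiring_1,zero_neq_one}) = 0"
  shows "CHAR('a) = 2"
proof (rule CHAR_eq_posI)
  show "of_nat 2 = (0::'a)" using assms by simp
  show "of_nat x \<noteq> (0::'a)" if "0 < x" "x < 2" for x
    using that by (simp add: less_2_cases_iff)
qed simp

lemma add_self_eq_0_char_2:
  assumes "(2::'a::ring_1) = 0"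
  shows "(x::'a) + x = 0"
  by (metis assms mult_2 mult_zero_left)

lemma power_card_UNIV_eq_self:
  fixes x :: "'a::{field,finite}"
  shows "x ^ card (UNIV::'a set) = x"
proof (cases "x = 0")
  case False
  let ?U = "UNIV - {0::'a}"
  have "(\<Prod>y\<in>?U. x * y) = (\<Prod>y\<in>?U. y)"
    by (rule prod.reindex_bij_witness[of _ "\<lambda>y. y / x" "\<lambda>y. x * y"]) (use False in auto)
  then have "(\<Prod>y\<in>?U. y) = (\<Prod>y\<in>?U. x * y)" ..
  also have "\<dots> = x ^ (card (UNIV::'a set) - 1) * (\<Prod>y\<in>?U. y)"
    by (simp add: prod.distrib card_Diff_singleton)
  finally have x_pow: "x ^ (card (UNIV::'a set) - 1) = 1"
    by simp
  have "card (UNIV::'a set) = Suc (card (UNIV::'a set) - 1)"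
    using finite_UNIV_card_ge_0[where ?'a = 'a] by simp
  then have "x ^ card (UNIV::'a set) = x ^ Suc (card (UNIV::'a set) - 1)"
    by (rule arg_cong)
  also have "\<dots> = x"
    by (simp only: power_Suc2 x_pow mult_1)
  finally show ?thesis .
qed (use finite_UNIV_card_ge_0[where ?'a = 'a] in simp)

lemma power_eq_self_if_cong_1:
  fixes x :: "'a::{field,finite}"
  assumes "0 < e" and "[e = 1] (mod card (UNIV::'a set) - 1)"
  shows "x ^ e = x"
proof -
  let ?q = "card (UNIV::'a set)"
  obtain j where e: "e = j * (?q - 1) + 1"
    using assms cong_le_nat[of 1 e] by auto
  have q: "?q = Suc (?q - 1)"
    using finite_UNIV_card_ge_0[where ?'a = 'a] by simp
  show ?thesis
  proof (cases "x = 0")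
    case False
    then have "x ^ (?q - 1) = 1"
      using power_card_UNIV_eq_self[of x] q by (metis mult_cancel_left1 power_Suc)
    then show ?thesis
      by (simp add: e power_add power_mult mult.commute[of j])
  qed (use assms in simp)
qed

lemma card_UNIV_field_ge_2: "2 \<le> card (UNIV::'a::{field,finite} set)"
proof -
  have "card {0, 1::'a} \<le> card (UNIV::'a set)"
    by (rule card_mono) simp_all
  then show ?thesis
    by simp
qed

lemma inj_power_if_coprime_card:
  assumes "0 < n" and "coprime n (card (UNIV::'a::{field,finite} set) - 1)"
  shows "inj (\<lambda>x::'a. x ^ n)"
proof -
  let ?d = "card (UNIV::'a set) - 1"
  obtain k where k: "[n * k = 1] (mod ?d)"
    using cong_solve_coprime_nat[OF assms(2)] by auto
  have "0 < ?d"
    using card_UNIV_field_ge_2[where ?'a = 'a] by simp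
  then have "0 < n * (k + ?d)"
    using assms(1) by simp
  moreover have "[n * (k + ?d) = 1] (mod ?d)"
    using cong_add[OF k cong_mult_self_right] by (simp add: distrib_left)
  ultimately have "(x ^ n) ^ (k + ?d) = x" for x :: 'a
    unfolding power_mult[symmetric] by (rule power_eq_self_if_cong_1)
  then show ?thesis
    by (rule inj_on_inverseI)
qed

lemma coprime_3_8_power_minus_1:
  assumes "odd m"
  shows "coprime 3 (8 ^ m - 1 :: nat)"
proof -
  obtain k where m: "m = Suc (2 * k)"
    using assms oddE by fastforce
  have "(8 ^ m :: nat) mod 3 = (8 * 64 ^ k) mod 3"
    by (simp add: m power_mult)
  also have "\<dots> = (8 * (64 ^ k mod 3)) mod 3"
    by (simp only: mod_mult_right_eq)
  also have "\<dots> = 2"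
  proof -
    have "(64::nat) ^ k mod 3 = 1"
      using power_mod[of "64::nat" 3 k] by simp
    then show ?thesis
      by simp
  qed
  finally have "(8 ^ m :: nat) mod 3 = 2" .
  moreover have "(X - 1) mod 3 = 1" if "X mod 3 = 2" for X :: nat
  proof -
    have "X = 3 * (X div 3) + 2"
      using that div_mult_mod_eq[of X 3] by simp
    then have "X - 1 = 3 * (X div 3) + 1"
      by linarith
    then show ?thesis
      by simp
  qed
  ultimately have "(8 ^ m - 1 :: nat) mod 3 = 1"
    by blast
  then show ?thesis
    using coprime_mod_right_iff[of 3 "8 ^ m - 1 :: nat"] by simp
qed

lemma Mcount_bij_comp:
  fixes G h k :: "'a::finite \<Rightarrow> 'a"
  assumes "bij h" and "bij k"
  shows "Mcount r (h \<circ> G \<circ> k) = Mcount r G"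
proof -
  have fibre: "card {x. h (G (k x)) = y} = card {z. G z = inv h y}" for y
  proof -
    have "{x. h (G (k x)) = y} = k -` {z. G z = inv h y}"
      using assms(1) by (auto simp: bij_inv_eq_iff)
    then show ?thesis
      using assms(2) card_vimage_inj[of k "{z. G z = inv h y}"] by (simp add: bij_def)
  qed
  have "{y. card {x. h (G (k x)) = y} = r} = inv h -` {w. card {z. G z = w} = r}"
    by (simp add: fibre vimage_def)
  then show ?thesis
    unfolding Mcount_def comp_apply using bij_imp_bij_inv[OF assms(1)]
      card_vimage_inj[of "inv h" "{w. card {z. G z = w} = r}"]
    by (simp add: bij_def)
qed

lemma card_range_bij_comp:
  fixes G h k :: "'a \<Rightarrow> 'a"
  assumes "bij h" and "bij k"
  shows "card (range (h \<circ> G \<circ> k)) = card (range G)"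
proof -
  have "range (h \<circ> G \<circ> k) = h ` G ` range k"
    by (simp only: image_comp comp_assoc)
  also have "\<dots> = h ` range G"
    using assms(2) by (simp add: bij_def)
  finally have "range (h \<circ> G \<circ> k) = h ` range G" .
  then show ?thesis
    using card_image[OF inj_on_subset[OF bij_is_inj[OF assms(1)] subset_UNIV]] by simp
qed

lemma cube_plus_sixth_power_add_char_2:
  assumes "(2::'a::idom) = 0"
  shows "(y + e :: 'a) ^ 3 + (y + e) ^ 6
    = y ^ 3 + y ^ 6 + e * y ^ 2 + e ^ 2 * y + e ^ 3 + e ^ 2 * y ^ 4 + e ^ 4 * y ^ 2 + e ^ 6"
proof -
  have "(y + e) ^ 3 + (y + e) ^ 6
    = y ^ 3 + y ^ 6 + e * y ^ 2 + e ^ 2 * y + e ^ 3 + e ^ 2 * y ^ 4 + e ^ 4 * y ^ 2 + e ^ 6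
      + 2 * (y^2*e + y*e^2 + 3*y^5*e + 7*y^4*e^2 + 10*y^3*e^3 + 7*y^2*e^4 + 3*y*e^5)"
    by algebra
  then show ?thesis
    using assms by simp
qed

lemma power_8_pow_eq_2_pow: "(8::nat) ^ k = 2 ^ (3 * k)"
  by (simp add: power_mult)

lemma card_power_eq_self_le:
  assumes "2 \<le> n"
  shows "card {x::'a::idom. x ^ n = x} \<le> n"
proof -
  let ?p = "monom (1::'a) n + [:0, -1:]"
  have "degree ?p = n"
    using assms by (subst degree_add_eq_left) (simp_all add: degree_monom_eq)
  moreover have "{x. x ^ n = x} = {x. poly ?p x = 0}"
    by (simp add: poly_monom add_eq_0_iff)
  ultimately show ?thesis
    using card_poly_roots_bound[of ?p] assms by fastforce
qed

(* The trace is a parameter only so that the locale mentions the field type. *)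
locale trace8_field =
  fixes m :: nat and Tr :: "'a::{field,finite} \<Rightarrow> 'a"
  assumes odd_m: "odd m"
    and card_UNIV: "card (UNIV::'a set) = 8 ^ m"
    and char_2: "(2::'a) = 0"
    and Tr_eq: "Tr = trace8 m"
begin

definition F8 :: "'a set" where
  "F8 = {c. c ^ 8 = c}"

definition K :: "'a set" where
  "K = {y. Tr y = 0}"

lemma CHAR_eq: "CHAR('a) = 2"
  by (rule CHAR_eq_2[OF char_2])

lemma add_self [simp]: "x + x = (0::'a)"
  by (rule add_self_eq_0_char_2[OF char_2])

lemma add_self_cancel [simp]: "x + (x + y) = (y::'a)"
  by (simp flip: add.assoc)

lemma add_eq_iff: "(x + y = z) = (y = x + (z::'a))"
  by auto

lemma power_2_pow_add: "(x + y :: 'a) ^ (2 ^ k) = x ^ (2 ^ k) + y ^ (2 ^ k)"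
  by (rule freshmans_dream') (simp_all add: CHAR_eq)

lemma power_2_pow_sum: "(\<Sum>i\<in>A. f i :: 'a) ^ (2 ^ k) = (\<Sum>i\<in>A. f i ^ (2 ^ k))"
  by (rule freshmans_dream_sum') (simp_all add: CHAR_eq)

lemma power_8_pow_m [simp]: "(x::'a) ^ (8 ^ m) = x"
  using power_card_UNIV_eq_self[of x] by (simp add: card_UNIV)

lemma one_mem_F8 [simp]: "1 \<in> F8"
  by (simp add: F8_def)

lemma F8_power_8_pow: "c \<in> F8 \<Longrightarrow> c ^ (8 ^ j) = c"
  by (induction j) (simp_all add: F8_def power_mult mult.commute[of 8])

lemma F8_add: "c \<in> F8 \<Longrightarrow> d \<in> F8 \<Longrightarrow> c + d \<in> F8"
  using power_2_pow_add[of c d 3] by (simp add: F8_def)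

lemma F8_power: "c \<in> F8 \<Longrightarrow> c ^ n \<in> F8"
proof -
  have "(c ^ n) ^ 8 = (c ^ 8) ^ n"
    by (simp only: mult.commute flip: power_mult)
  then show "c \<in> F8 \<Longrightarrow> c ^ n \<in> F8"
    by (simp add: F8_def)
qed

lemma Tr_add: "Tr (x + y) = Tr x + Tr y"
  by (simp add: Tr_eq trace8_def power_8_pow_eq_2_pow power_2_pow_add sum.distrib)

lemma Tr_square: "Tr (x ^ 2) = Tr x ^ 2"
  using power_2_pow_sum[of "\<lambda>j. x ^ (8 ^ j)" "{..<m}" 1]
  by (simp add: Tr_eq trace8_def flip: power_mult) (simp add: mult.commute)

lemma Tr_mult_F8: "c \<in> F8 \<Longrightarrow> Tr (c * x) = c * Tr x"
  by (simp add: Tr_eq trace8_def power_mult_distrib F8_power_8_pow sum_distrib_left)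

lemma Tr_F8: "c \<in> F8 \<Longrightarrow> Tr c = c"
proof -
  assume c: "c \<in> F8"
  obtain k where "m = 2 * k + 1"
    using odd_m oddE by blast
  then have "of_nat m = (1::'a)"
    using char_2 by simp
  then show "Tr c = c"
    using c by (simp add: Tr_eq trace8_def F8_power_8_pow)
qed

lemma Tr_mem_F8: "Tr x \<in> F8"
proof -
  have "Tr x ^ 8 = (\<Sum>j<m. x ^ (8 ^ Suc j))"
    using power_2_pow_sum[of "\<lambda>j. x ^ (8 ^ j)" "{..<m}" 3]
    by (simp add: Tr_eq trace8_def flip: power_mult) (simp add: mult.commute)
  also have "\<dots> = Tr x"
    using sum.lessThan_Suc_shift[of "\<lambda>j. x ^ (8 ^ j)" m]
    by (simp add: Tr_eq trace8_def add.commute)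
  finally show ?thesis
    by (simp add: F8_def)
qed

definition g :: "'a \<Rightarrow> 'a" where
  "g z = z + Tr (z ^ 3 + z ^ 6)"

definition offset :: "'a \<Rightarrow> 'a" where
  "offset y = Tr (y ^ 3 + y ^ 6)"

definition Q :: "'a \<Rightarrow> 'a" where
  "Q e = e + e ^ 3 + e ^ 6"

definition beta :: "'a \<Rightarrow> 'a" where
  "beta y = Tr y + offset (y + Tr y)"

lemma g_add_F8:
  assumes "y \<in> K" and "e \<in> F8"
  shows "g (y + e) = y + offset y + Q e"
proof -
  have Tr_y2: "Tr (y ^ 2) = 0" and Tr_y4: "Tr (y ^ 4) = 0"
    using assms(1) Tr_square[of y] Tr_square[of "y ^ 2"] by (simp_all add: K_def flip: power_mult)
  have "Tr ((y + e) ^ 3 + (y + e) ^ 6)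
      = offset y + e * Tr (y ^ 2) + e ^ 2 * Tr y + Tr (e ^ 3) + e ^ 2 * Tr (y ^ 4)
        + e ^ 4 * Tr (y ^ 2) + Tr (e ^ 6)"
    using assms(2) by (simp add: cube_plus_sixth_power_add_char_2[OF char_2] Tr_add Tr_mult_F8
      F8_power offset_def)
  also have "\<dots> = offset y + e ^ 3 + e ^ 6"
    using assms by (simp add: Tr_y2 Tr_y4 Tr_F8 F8_power K_def)
  finally show ?thesis
    by (simp add: g_def Q_def algebra_simps)
qed

lemma add_Tr_mem_K: "y + Tr y \<in> K"
  by (simp add: K_def Tr_add Tr_F8 Tr_mem_F8)

lemma card_g_fibre: "card {z. g z = y} = card {e \<in> F8. Q e = beta y}"
proof -
  let ?y0 = "y + Tr y"
  have g_shift: "g (?y0 + e) = ?y0 + offset ?y0 + Q e" if "e \<in> F8" for e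
    using g_add_F8[OF add_Tr_mem_K that] .
  have "{z. g z = y} = (\<lambda>e. ?y0 + e) ` {e \<in> F8. Q e = beta y}"
  proof (intro set_eqI iffI)
    fix z
    assume "z \<in> {z. g z = y}"
    then have gz: "g z = y" by simp
    define e where "e = ?y0 + z"
    have z: "z = ?y0 + e"
      by (simp add: e_def)
    have "e = Tr y + Tr (z ^ 3 + z ^ 6)"
      using gz by (simp add: e_def g_def add_eq_iff algebra_simps)
    then have e: "e \<in> F8"
      by (simp add: F8_add Tr_mem_F8)
    have "Q e = beta y"
      using gz g_shift[OF e] by (simp add: z beta_def add_eq_iff algebra_simps)
    then show "z \<in> (\<lambda>e. ?y0 + e) ` {e \<in> F8. Q e = beta y}"
      using z e by blast
  next
    fix z
    assume "z \<in> (\<lambda>e. ?y0 + e) ` {e \<in> F8. Q e = beta y}"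
    then obtain e where "e \<in> F8" "Q e = beta y" "z = ?y0 + e"
      by blast
    then show "z \<in> {z. g z = y}"
      using g_shift by (simp add: beta_def algebra_simps)
  qed
  then show ?thesis
    by (simp add: card_image inj_on_def)
qed

lemma beta_mem_F8: "beta y \<in> F8"
  by (simp add: beta_def offset_def F8_add Tr_mem_F8)

lemma card_beta_vimage:
  assumes "S \<subseteq> F8"
  shows "card {y. beta y \<in> S} = card K * card S"
proof -
  have offset_F8: "v + offset y0 \<in> F8" if "v \<in> S" for v y0
    using that assms by (auto simp: offset_def F8_add Tr_mem_F8)
  have Tr_K_F8: "Tr (y0 + v) = v" if "y0 \<in> K" "v \<in> F8" for y0 v
    using that by (simp add: K_def Tr_add Tr_F8)
  have "bij_betw (\<lambda>y. (y + Tr y, beta y)) {y. beta y \<in> S} (K \<times> S)"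
  proof (rule bij_betw_byWitness[where f' = "\<lambda>(y0, v). y0 + (v + offset y0)"])
    show "\<forall>y\<in>{y. beta y \<in> S}. (\<lambda>(y0, v). y0 + (v + offset y0)) (y + Tr y, beta y) = y"
      by (simp add: beta_def algebra_simps)
    show "\<forall>p\<in>K \<times> S. (\<lambda>y. (y + Tr y, beta y)) ((\<lambda>(y0, v). y0 + (v + offset y0)) p) = p"
      using Tr_K_F8 offset_F8 by (auto simp: beta_def algebra_simps)
    show "(\<lambda>y. (y + Tr y, beta y)) ` {y. beta y \<in> S} \<subseteq> K \<times> S"
      using add_Tr_mem_K by auto
    show "(\<lambda>(y0, v). y0 + (v + offset y0)) ` (K \<times> S) \<subseteq> {y. beta y \<in> S}"
      using Tr_K_F8 offset_F8 by (auto simp: beta_def algebra_simps)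
  qed
  then show ?thesis
    by (simp add: bij_betw_same_card card_cartesian_product)
qed

lemma card_K_times_card_F8: "card K * card F8 = 8 ^ m"
  using card_beta_vimage[of F8] beta_mem_F8 card_UNIV by simp

lemma card_K_le: "card K \<le> 8 ^ (m - 1)"
proof -
  obtain n where m: "m = Suc n"
    using odd_m by (cases m) auto
  let ?p = "monom (1::'a) (8 ^ n) + (\<Sum>j<n. monom 1 (8 ^ j))"
  have "degree (\<Sum>j<n. monom (1::'a) (8 ^ j)) < 8 ^ n"
    by (rule degree_sum_less) (auto simp: degree_monom_eq)
  then have "degree ?p = 8 ^ n"
    by (subst degree_add_eq_left) (simp_all add: degree_monom_eq)
  moreover have "K = {x. poly ?p x = 0}"
    unfolding K_def by (simp add: Tr_eq trace8_def m poly_sum poly_monom add.commute)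
  ultimately show ?thesis
    using card_poly_roots_bound[of ?p] m by fastforce
qed

lemma card_F8: "card F8 = 8" and card_K: "card K = 8 ^ (m - 1)"
proof -
  have "card F8 \<le> 8"
    using card_power_eq_self_le[of 8, where ?'a = 'a] by (simp add: F8_def)
  then have le_F8: "card K * card F8 \<le> card K * 8"
    by simp
  have le_K: "card K * 8 \<le> 8 ^ (m - 1) * 8"
    using card_K_le by simp
  have "8 ^ (m - 1) * 8 = card K * card F8"
    using odd_m card_K_times_card_F8 by (cases m) (simp_all add: mult.commute)
  then have K: "card K * 8 = 8 ^ (m - 1) * 8" and F8: "card K * card F8 = card K * 8"
    using le_F8 le_K by linarith+
  show "card K = 8 ^ (m - 1)"
    using K by simp
  then show "card F8 = 8"
    using F8 by simp
qed

definition tr2 :: "'a \<Rightarrow> 'a" where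
  "tr2 e = e + e ^ 2 + e ^ 4"

lemma square_add: "(x + y) ^ 2 = x ^ 2 + (y ^ 2 :: 'a)"
  using power_2_pow_add[of x y 1] by simp

lemma tr2_add: "tr2 (c + d) = tr2 c + tr2 d"
  using power_2_pow_add[of c d 2] by (simp add: tr2_def square_add algebra_simps)

lemma tr2_one [simp]: "tr2 1 = 1"
  by (simp add: tr2_def)

lemma tr2_square: "c \<in> F8 \<Longrightarrow> tr2 (c ^ 2) = tr2 c"
  by (simp add: tr2_def F8_def algebra_simps flip: power_mult)

lemma tr2_eq_0_or_1:
  assumes "c \<in> F8"
  shows "tr2 c = 0 \<or> tr2 c = 1"
proof -
  have "tr2 c ^ 2 = c ^ 2 + c ^ 4 + c ^ 8"
    by (simp add: tr2_def square_add flip: power_mult)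
  then have "tr2 c ^ 2 = tr2 c"
    using assms by (simp add: tr2_def F8_def algebra_simps)
  then have "tr2 c * (tr2 c - 1) = 0"
    by (simp add: power2_eq_square algebra_simps)
  then show ?thesis
    by simp
qed

lemma Q_F8: "e \<in> F8 \<Longrightarrow> Q e = (if tr2 e = 1 then 1 else e ^ 2)"
proof -
  have "Q e + 2 * (e ^ 2 + e ^ 4) = e ^ 2 + tr2 e * (1 + e ^ 2)"
    unfolding Q_def tr2_def by algebra
  then have "Q e = e ^ 2 + tr2 e * (1 + e ^ 2)"
    by (simp add: char_2)
  then show "e \<in> F8 \<Longrightarrow> ?thesis"
    using tr2_eq_0_or_1[of e] by (auto simp: algebra_simps char_2)
qed

lemma F8_square_eq_iff: "c \<in> F8 \<Longrightarrow> e \<in> F8 \<Longrightarrow> e ^ 2 = c \<longleftrightarrow> e = c ^ 4"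
  by (auto simp: F8_def simp flip: power_mult)

definition Q_fibre_size :: "'a \<Rightarrow> nat" where
  "Q_fibre_size v = (if v = 1 then 4 else if tr2 v = 0 then 1 else 0)"

lemma card_tr2_eq_0: "card {e \<in> F8. tr2 e = 0} = 4" and card_tr2_eq_1: "card {e \<in> F8. tr2 e = 1} = 4"
proof -
  have "{e \<in> F8. tr2 e = 1} = (\<lambda>e. e + 1) ` {e \<in> F8. tr2 e = 0}"
  proof (intro set_eqI iffI)
    fix e
    assume "e \<in> {e \<in> F8. tr2 e = 1}"
    then have "e + 1 \<in> {e \<in> F8. tr2 e = 0}" and "e = e + 1 + 1"
      by (simp_all add: F8_add tr2_add add.assoc)
    then show "e \<in> (\<lambda>e. e + 1) ` {e \<in> F8. tr2 e = 0}"
      by blast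
  qed (auto simp: F8_add tr2_add)
  then have "card {e \<in> F8. tr2 e = 1} = card {e \<in> F8. tr2 e = 0}"
    by (simp add: card_image inj_on_def)
  moreover have "card {e \<in> F8. tr2 e = 0} + card {e \<in> F8. tr2 e = 1} = card F8"
    using tr2_eq_0_or_1 by (subst card_Un_disjoint[symmetric]) (auto intro: arg_cong[where f = card])
  ultimately show "card {e \<in> F8. tr2 e = 0} = 4" and "card {e \<in> F8. tr2 e = 1} = 4"
    using card_F8 by simp_all
qed

lemma card_Q_fibre:
  assumes "v \<in> F8"
  shows "card {e \<in> F8. Q e = v} = Q_fibre_size v"
proof (cases "v = 1")
  case True
  have "e ^ 2 \<noteq> 1" if "e \<in> F8" and "tr2 e \<noteq> 1" for e
    using that tr2_square[of e] by auto
  then have "{e \<in> F8. Q e = v} = {e \<in> F8. tr2 e = 1}"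
    using True by (auto simp: Q_F8 split: if_splits)
  then show ?thesis
    using True by (simp add: card_tr2_eq_1 Q_fibre_size_def)
next
  case False
  have "Q e = v \<longleftrightarrow> tr2 e = 0 \<and> e = v ^ 4" if "e \<in> F8" for e
  proof -
    have "Q e = v \<longleftrightarrow> tr2 e \<noteq> 1 \<and> e ^ 2 = v"
      using False that by (simp add: Q_F8)
    also have "\<dots> \<longleftrightarrow> tr2 e = 0 \<and> e = v ^ 4"
      using tr2_eq_0_or_1[OF that] F8_square_eq_iff[OF assms that] by auto
    finally show ?thesis .
  qed
  then have "{e \<in> F8. Q e = v} = {e \<in> F8. tr2 e = 0 \<and> e = v ^ 4}"
    by auto
  also have "\<dots> = (if tr2 v = 0 then {v ^ 4} else {})"
  proof -
    have "tr2 (v ^ 4) = tr2 v"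
      using tr2_square[of "v ^ 2"] tr2_square[of v] assms by (simp add: F8_power flip: power_mult)
    then show ?thesis
      using assms by (auto simp: F8_power)
  qed
  finally show ?thesis
    using False by (simp add: Q_fibre_size_def)
qed

lemma card_Q_fibre_size_eq:
  "card {v \<in> F8. Q_fibre_size v = r} = (if r = 0 then 3 else if r = 1 then 4 else if r = 4 then 1 else 0)"
proof -
  have "{v \<in> F8. Q_fibre_size v = r} =
    (if r = 0 then {e \<in> F8. tr2 e = 1} - {1} else if r = 1 then {e \<in> F8. tr2 e = 0}
     else if r = 4 then {1} else {})"
    using tr2_eq_0_or_1 by (auto simp: Q_fibre_size_def)
  then show ?thesis
    by (simp add: card_tr2_eq_0 card_tr2_eq_1)
qed

lemma Mcount_g: "Mcount r g = card K * card {v \<in> F8. Q_fibre_size v = r}"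
proof -
  have "{y. card {z. g z = y} = r} = {y. beta y \<in> {v \<in> F8. Q_fibre_size v = r}}"
    using beta_mem_F8 by (auto simp: card_g_fibre card_Q_fibre)
  then show ?thesis
    unfolding Mcount_def by (simp only:) (rule card_beta_vimage, blast)
qed

end

lemma card_range_add_Mcount_0:
  fixes f :: "'a::finite \<Rightarrow> 'a"
  shows "card (range f) + Mcount 0 f = card (UNIV::'a set)"
proof -
  have "{y. card {x. f x = y} = 0} = UNIV - range f"
    by auto
  then show ?thesis
    by (simp add: Mcount_def card_Diff_subset card_mono)
qed

theorem proposition5p4:
  fixes m :: nat and a :: "'a::{field,finite}"
  assumes "odd m"
    and "card (UNIV :: 'a set) = 2 ^ (3 * m)"
    and "(2::'a) = 0"
    and "a \<noteq> 0"
  defines "f \<equiv> (\<lambda>x::'a. x ^ 3 + inverse a * trace8 m (a ^ 3 * x ^ 9 + a ^ 6 * x ^ 18))"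
  shows "Mcount 1 f = 2 ^ (3 * m - 1)
       \<and> Mcount 4 f = 2 ^ (3 * m - 3)
       \<and> (\<forall>r. r \<ge> 1 \<and> r \<noteq> 1 \<and> r \<noteq> 4 \<longrightarrow> Mcount r f = 0)
       \<and> card (range f) = 5 * 2 ^ (3 * m - 3)"
proof -
  interpret trace8_field m "trace8 m :: 'a \<Rightarrow> 'a"
    using assms(1-3) by unfold_locales (simp_all add: power_mult)
  have "f = (\<lambda>w. inverse a * w) \<circ> g \<circ> (\<lambda>x. a * x ^ 3)"
    using assms(4) by (auto simp: f_def g_def power_mult_distrib distrib_left simp flip: power_mult)
  moreover have "bij (\<lambda>w. inverse a * w)" and "bij (\<lambda>x. a * x ^ 3)"
    using assms(4) inj_power_if_coprime_card[of 3, where ?'a = 'a]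
      coprime_3_8_power_minus_1[OF assms(1)] card_UNIV
    by (auto simp: bij_def finite_UNIV_inj_surj inj_on_def)
  ultimately have "Mcount r f = Mcount r g" and "card (range f) = card (range g)" for r
    by (simp_all only: Mcount_bij_comp card_range_bij_comp)
  moreover have "card (range g) = 5 * card K"
    using card_range_add_Mcount_0[of g] card_K_times_card_F8 card_F8 card_UNIV
    by (simp add: Mcount_g card_Q_fibre_size_eq)
  moreover have "(2::nat) ^ (3 * m - 1) = 4 * 8 ^ (m - 1) \<and> (2::nat) ^ (3 * m - 3) = 8 ^ (m - 1)"
    using assms(1) by (cases m) (simp_all add: power_mult power_add)
  ultimately show ?thesis
    by (simp add: Mcount_g card_Q_fibre_size_eq card_K)
qed

end
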